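(* Let $\mathbf{k}$ be a commutative ring and $H$ a commutative connected graded $\mathbf{k}$-Hopf algebra with antipode $S_H$. Let $\beta_H:H\to H\otimes\mathrm{QSym}_{\mathbf{k}}$ be given by $\beta_H(h)=\sum_{\alpha\in\mathrm{Comp}}\xi_\alpha(h)\otimes M_\alpha$. Then $$S_H=(\mathrm{id}_H\otimes(\varepsilon_P\circ S_{\mathrm{QSym}_{\mathbf{k}}}))\circ\beta_H,$$ where $S_{\mathrm{QSym}_{\mathbf{k}}}$ is the antipode of $\mathrm{QSym}_{\mathbf{k}}$ and $H\otimes\mathbf{k}$ is identified with $H$.
   Context: A composition is a finite sequence of positive integers; $\mathrm{Comp}$ the set of compositions. $\mathrm{QSym}_{\mathbf{k}}\subseteq\mathbf{k}[[x_1,x_2,\ldots]]$ is the Hopf algebra of quasisymmetric functions with monomial basis $M_\alpha=\sum_{1\le i_1<\cdots<i_\ell}x_{i_1}^{\alpha_1}\cdots x_{i_\ell}^{\alpha_\ell}$ for $\alpha=(\alpha_1,\ldots,\alpha_\ell)$. $\varepsilon_P:\mathrm{QSym}_{\mathbf{k}}\to\mathbf{k}$ is $f\mapsto f(1,0,0,\ldots)$. For $\alpha=(a_1,\ldots,a_k)$, $\xi_\alpha=m^{(k-1)}\circ\pi_\alpha\circ\Delta^{(k-1)}:H\to H$, where $\Delta^{(k-1)}:H\to H^{\otimes k}$ is the iterated comultiplication ($\Delta^{(-1)}=\varepsilon$, $\Delta^{(0)}=\mathrm{id}$, $\Delta^{(k)}=(\mathrm{id}\otimes\Delta^{(k-1)})\circ\Delta$),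 $m^{(k-1)}:H^{\otimes k}\to H$ is $h_1\otimes\cdots\otimes h_k\mapsto h_1\cdots h_k$ ($m^{(-1)}$ the unit), and $\pi_\alpha=\pi_{a_1}\otimes\cdots\otimes\pi_{a_k}$ with $\pi_n:H\to H$ the projection onto the degree-$n$ component $H_n$. The sum defining $\beta_H(h)$ has finitely many nonzero terms. *)

theory Defs
  imports Main "HOL-Library.Groups_Big_Fun"
begin

definition is_comp :: "nat list \<Rightarrow> bool" where
  "is_comp \<alpha> \<longleftrightarrow> (\<forall>a\<in>set \<alpha>. 0 < a)"

text \<open>An element of QSym_k is represented by its (finitely supported) coefficient
  function in the monomial basis (M_alpha) indexed by compositions.\<close>

definition qsym_M :: "nat list \<Rightarrow> nat list \<Rightarrow> 'k::comm_ring_1" where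
  "qsym_M \<alpha> = (\<lambda>\<gamma>. if \<gamma> = \<alpha> then 1 else 0)"

text \<open>Quasi-shuffles (stuffles): M_a * M_b = sum of M_g over g in stuffle a b.\<close>
fun stuffle :: "nat list \<Rightarrow> nat list \<Rightarrow> nat list list" where
  "stuffle [] b = [b]"
| "stuffle a [] = [a]"
| "stuffle (x # a) (y # b) =
     map ((#) x) (stuffle a (y # b)) @ map ((#) y) (stuffle (x # a) b)
     @ map ((#) (x + y)) (stuffle a b)"

definition qsym_mult :: "(nat list \<Rightarrow> 'k::comm_ring_1) \<Rightarrow> (nat list \<Rightarrow> 'k) \<Rightarrow> nat list \<Rightarrow> 'k" where
  "qsym_mult f g = (\<lambda>\<gamma>. Sum_any (\<lambda>(\<alpha>, \<beta>). f \<alpha> * g \<beta> * of_nat (count_list (stuffle \<alpha> \<beta>) \<gamma>)))"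

text \<open>Antipode of QSym on the basis: the unique map with m (S x id) Delta = u eps,
  where Delta(M_alpha) = sum over alpha = beta gamma of M_beta (x) M_gamma
  (deconcatenation) and eps(M_alpha) = [alpha = ()].\<close>
function qsym_S_M :: "nat list \<Rightarrow> nat list \<Rightarrow> 'k::comm_ring_1" where
  "qsym_S_M \<alpha> = (if \<alpha> = [] then qsym_M []
      else (\<lambda>\<gamma>. - sum_list (map (\<lambda>i. qsym_mult (qsym_S_M (take i \<alpha>)) (qsym_M (drop i \<alpha>)) \<gamma>)
                              [0..<length \<alpha>])))"
  by pat_completeness auto
termination
  by (relation "measure length") auto

definition qsym_S :: "(nat list \<Rightarrow> 'k::comm_ring_1) \<Rightarrow> nat list \<Rightarrow> 'k" where
  "qsym_S f = (\<lambda>\<gamma>. Sum_any (\<lambda>\<alpha>. f \<alpha> * qsym_S_M \<alpha> \<gamma>))"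

text \<open>Evaluation of M_alpha at a point x = (x_0, x_1, ...) with x_i = 0 for i >= N:
  M_alpha(x) = sum over i_1 < ... < i_l of x_{i_1}^{a_1} ... x_{i_l}^{a_l}
  (indices i >= N contribute 0 since all parts are positive).\<close>
definition M_eval :: "(nat \<Rightarrow> 'k::comm_ring_1) \<Rightarrow> nat \<Rightarrow> nat list \<Rightarrow> 'k" where
  "M_eval x N \<alpha> =
     (\<Sum>is \<in> {is. length is = length \<alpha> \<and> sorted_wrt (<) is \<and> set is \<subseteq> {..<N}}.
        prod_list (map (\<lambda>(i, a). x i ^ a) (zip is \<alpha>)))"

definition eps_P :: "(nat list \<Rightarrow> 'k::comm_ring_1) \<Rightarrow> 'k" where
  "eps_P f = Sum_any (\<lambda>\<alpha>. f \<alpha> * M_eval (\<lambda>i. if i = 0 then 1 else 0) 1 \<alpha>)"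

text \<open>H is the type 'h (a commutative ring) with a k-module structure smult.
  Tensors in H (x) H are represented in Sweedler style as finite lists of pairs;
  H (x) H (x) H likewise.  Two such representatives are identified when every
  k-multilinear map into H takes the same value on them.\<close>

definition k_algebra :: "('k::comm_ring_1 \<Rightarrow> 'h::comm_ring_1 \<Rightarrow> 'h) \<Rightarrow> bool" where
  "k_algebra sm \<longleftrightarrow>
     (\<forall>c d x. sm (c + d) x = sm c x + sm d x) \<and>
     (\<forall>c x y. sm c (x + y) = sm c x + sm c y) \<and>
     (\<forall>c d x. sm (c * d) x = sm c (sm d x)) \<and>
     (\<forall>x. sm 1 x = x) \<and>
     (\<forall>c x y. sm c (x * y) = sm c x * y)"

definition k_linear :: "('k::comm_ring_1 \<Rightarrow> 'h::comm_ring_1 \<Rightarrow> 'h) \<Rightarrow> ('h \<Rightarrow> 'h) \<Rightarrow> bool" where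
  "k_linear sm f \<longleftrightarrow> (\<forall>x y. f (x + y) = f x + f y) \<and> (\<forall>c x. f (sm c x) = sm c (f x))"

definition k_bilinear :: "('k::comm_ring_1 \<Rightarrow> 'h::comm_ring_1 \<Rightarrow> 'h) \<Rightarrow> ('h \<Rightarrow> 'h \<Rightarrow> 'h) \<Rightarrow> bool" where
  "k_bilinear sm B \<longleftrightarrow> (\<forall>a. k_linear sm (B a)) \<and> (\<forall>b. k_linear sm (\<lambda>a. B a b))"

definition k_trilinear :: "('k::comm_ring_1 \<Rightarrow> 'h::comm_ring_1 \<Rightarrow> 'h) \<Rightarrow> ('h \<Rightarrow> 'h \<Rightarrow> 'h \<Rightarrow> 'h) \<Rightarrow> bool" where
  "k_trilinear sm T \<longleftrightarrow> (\<forall>a b. k_linear sm (T a b)) \<and> (\<forall>a c. k_linear sm (\<lambda>b. T a b c))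
      \<and> (\<forall>b c. k_linear sm (\<lambda>a. T a b c))"

definition teq2 :: "('k::comm_ring_1 \<Rightarrow> 'h::comm_ring_1 \<Rightarrow> 'h) \<Rightarrow> ('h \<times> 'h) list \<Rightarrow> ('h \<times> 'h) list \<Rightarrow> bool" where
  "teq2 sm t u \<longleftrightarrow> (\<forall>B. k_bilinear sm B \<longrightarrow>
      sum_list (map (\<lambda>(a, b). B a b) t) = sum_list (map (\<lambda>(a, b). B a b) u))"

definition comm_connected_graded_hopf ::
  "('k::comm_ring_1 \<Rightarrow> 'h::comm_ring_1 \<Rightarrow> 'h) \<Rightarrow> (nat \<Rightarrow> 'h \<Rightarrow> 'h) \<Rightarrow>
   ('h \<Rightarrow> ('h \<times> 'h) list) \<Rightarrow> ('h \<Rightarrow> 'k) \<Rightarrow> ('h \<Rightarrow> 'h) \<Rightarrow> bool" where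
  "comm_connected_graded_hopf sm proj \<Delta> \<epsilon> S \<longleftrightarrow>
     k_algebra sm \<and>
     \<comment> \<open>grading: H = direct sum of the H_n, pi_n the projections\<close>
     (\<forall>n. k_linear sm (proj n)) \<and>
     (\<forall>m n x. proj m (proj n x) = (if m = n then proj n x else 0)) \<and>
     (\<forall>x. \<exists>N. x = (\<Sum>n\<le>N. proj n x)) \<and>
     proj 0 1 = 1 \<and>
     (\<forall>m p q x y. proj m (proj p x * proj q y) = (if m = p + q then proj p x * proj q y else 0)) \<and>
     \<comment> \<open>connected: H_0 = k 1\<close>
     (\<forall>x. \<exists>c. proj 0 x = sm c 1) \<and>
     \<comment> \<open>counit: a graded k-algebra map\<close>
     (\<forall>x y. \<epsilon> (x + y) = \<epsilon> x + \<epsilon> y) \<and> (\<forall>c x. \<epsilon> (sm c x) = c * \<epsilon> x) \<and>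
     (\<forall>x y. \<epsilon> (x * y) = \<epsilon> x * \<epsilon> y) \<and> \<epsilon> 1 = 1 \<and>
     (\<forall>n x. 0 < n \<longrightarrow> \<epsilon> (proj n x) = 0) \<and>
     \<comment> \<open>comultiplication: k-linear, graded, coassociative, counital, algebra map\<close>
     (\<forall>x y. teq2 sm (\<Delta> (x + y)) (\<Delta> x @ \<Delta> y)) \<and>
     (\<forall>c x. teq2 sm (\<Delta> (sm c x)) (map (\<lambda>(a, b). (sm c a, b)) (\<Delta> x))) \<and>
     (\<forall>n x. teq2 sm (\<Delta> (proj n x))
        (concat (map (\<lambda>p. map (\<lambda>(a, b). (proj p a, proj (n - p) b)) (\<Delta> x)) [0..<Suc n]))) \<and>
     (\<forall>T x. k_trilinear sm T \<longrightarrow>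
        sum_list (map (\<lambda>(a, b). sum_list (map (\<lambda>(c, d). T c d b) (\<Delta> a))) (\<Delta> x)) =
        sum_list (map (\<lambda>(a, b). sum_list (map (\<lambda>(c, d). T a c d) (\<Delta> b))) (\<Delta> x))) \<and>
     (\<forall>x. sum_list (map (\<lambda>(a, b). sm (\<epsilon> a) b) (\<Delta> x)) = x) \<and>
     (\<forall>x. sum_list (map (\<lambda>(a, b). sm (\<epsilon> b) a) (\<Delta> x)) = x) \<and>
     (\<forall>x y. teq2 sm (\<Delta> (x * y))
        (concat (map (\<lambda>(a, b). map (\<lambda>(c, d). (a * c, b * d)) (\<Delta> y)) (\<Delta> x)))) \<and>
     teq2 sm (\<Delta> 1) [(1, 1)] \<and>
     \<comment> \<open>antipode\<close>
     k_linear sm S \<and>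
     (\<forall>x. sum_list (map (\<lambda>(a, b). S a * b) (\<Delta> x)) = sm (\<epsilon> x) 1) \<and>
     (\<forall>x. sum_list (map (\<lambda>(a, b). a * S b) (\<Delta> x)) = sm (\<epsilon> x) 1)"

fun coprod_iter :: "('h \<Rightarrow> ('h \<times> 'h) list) \<Rightarrow> nat \<Rightarrow> 'h \<Rightarrow> 'h list list" where
  "coprod_iter \<Delta> 0 h = [[h]]"
| "coprod_iter \<Delta> (Suc k) h =
     concat (map (\<lambda>(a, b). map ((#) a) (coprod_iter \<Delta> k b)) (\<Delta> h))"

text \<open>xi_alpha = m^(k-1) o pi_alpha o Delta^(k-1); for alpha = () this is u o eps.\<close>
definition xi :: "('k::comm_ring_1 \<Rightarrow> 'h::comm_ring_1 \<Rightarrow> 'h) \<Rightarrow> (nat \<Rightarrow> 'h \<Rightarrow> 'h) \<Rightarrow>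
    ('h \<Rightarrow> ('h \<times> 'h) list) \<Rightarrow> ('h \<Rightarrow> 'k) \<Rightarrow> nat list \<Rightarrow> 'h \<Rightarrow> 'h" where
  "xi sm proj \<Delta> \<epsilon> \<alpha> h =
     (if \<alpha> = [] then sm (\<epsilon> h) 1
      else sum_list (map (\<lambda>t. prod_list (map (\<lambda>(a, x). proj a x) (zip \<alpha> t)))
                         (coprod_iter \<Delta> (length \<alpha> - 1) h)))"

end

theory Submission
  imports Defs
begin

text \<open>Applying \<epsilon>_P \<circ> S_QSym to M_\<alpha> gives (-1)^\<ell>(\<alpha>): \<epsilon>_P only sees the coefficients of the
  M_\<gamma> with at most one part, and the recursive definition of the antipode shows that in S(M_\<alpha>)
  these sit at () and (|\<alpha>|) and change sign whenever a part is appended.  So the theorem is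
  Takeuchi's formula S = \<Sum>_\<alpha> (-1)^\<ell>(\<alpha>) \<xi>_\<alpha>.  On the degree n component this follows by strong
  induction on n from the antipode recursion S(\<pi>_n x) = - \<Sum>_{p<n} S(\<pi>_p x_(1)) \<pi>_{n-p}(x_(2)):
  coassociativity gives \<xi>_{\<beta>d}(x) = \<Sum> \<xi>_\<beta>(x_(1)) \<pi>_d(x_(2)), and every composition of n is
  uniquely a composition of some p < n followed by the part n - p.\<close>

lemma length_le_stuffle:
  "\<gamma> \<in> set (stuffle \<alpha> \<beta>) \<Longrightarrow> length \<alpha> \<le> length \<gamma> \<and> length \<beta> \<le> length \<gamma>"
  by (induction \<alpha> \<beta> arbitrary: \<gamma> rule: stuffle.induct) fastforce+

lemma qsym_mult_M_short:
  assumes "length \<gamma> < length \<delta>"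
  shows "qsym_mult f (qsym_M \<delta>) \<gamma> = (0::'k::comm_ring_1)"
proof -
  have "f \<alpha> * qsym_M \<delta> \<beta> * of_nat (count_list (stuffle \<alpha> \<beta>) \<gamma>) = (0::'k)" for \<alpha> \<beta>
  proof (cases "\<beta> = \<delta>")
    case True
    then have "\<gamma> \<notin> set (stuffle \<alpha> \<beta>)" using length_le_stuffle assms by fastforce
    then show ?thesis by simp
  qed (simp add: qsym_M_def)
  then show ?thesis unfolding qsym_mult_def by simp
qed

lemma qsym_S_M_Nil: "qsym_S_M [] = qsym_M []"
  by (subst qsym_S_M.simps) simp

lemma qsym_S_M_nonempty: "\<alpha> \<noteq> [] \<Longrightarrow> qsym_S_M \<alpha> \<gamma> =
    - (\<Sum>i\<leftarrow>[0..<length \<alpha>]. qsym_mult (qsym_S_M (take i \<alpha>)) (qsym_M (drop i \<alpha>)) \<gamma>)"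
  by (subst qsym_S_M.simps) simp

declare qsym_S_M.simps[simp del]

lemma qsym_S_M_at_Nil: "qsym_S_M \<alpha> [] = (if \<alpha> = [] then 1 else (0::'k::comm_ring_1))"
proof (cases "\<alpha> = []")
  case False
  then show ?thesis
    by (simp add: qsym_S_M_nonempty interv_sum_list_conv_sum_set_nat qsym_mult_M_short)
qed (simp add: qsym_S_M_Nil qsym_M_def)

lemma qsym_mult_M_single_at_single:
  "qsym_mult f (qsym_M [d]) [n] =
     (if n = d then f [] else 0) + (if d \<le> n then f [n - d] else (0::'k::comm_ring_1))"
proof -
  define g where "g = (\<lambda>(\<alpha>, \<beta>). f \<alpha> * qsym_M [d] \<beta> * of_nat (count_list (stuffle \<alpha> \<beta>) [n]) :: 'k)"
  have supp: "{p. g p \<noteq> 0} \<subseteq> {([], [d]), ([n - d], [d])}"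
  proof (rule subsetI)
    fix p assume "p \<in> {p. g p \<noteq> 0}"
    then obtain \<alpha> \<beta> where p: "p = (\<alpha>, \<beta>)" and "g (\<alpha>, \<beta>) \<noteq> 0" by (cases p) auto
    then have \<beta>: "\<beta> = [d]" and mem: "[n] \<in> set (stuffle \<alpha> [d])"
      using count_notin by (fastforce simp: g_def qsym_M_def split: if_splits)+
    then have "length \<alpha> \<le> 1" using length_le_stuffle[OF mem] by simp
    then consider "\<alpha> = []" | m where "\<alpha> = [m]" by (cases \<alpha>) auto
    then show "p \<in> {([], [d]), ([n - d], [d])}"
      by cases (use p \<beta> mem in auto)
  qed
  have "qsym_mult f (qsym_M [d]) [n] = Sum_any g" unfolding qsym_mult_def g_def ..
  also have "\<dots> = g ([], [d]) + g ([n - d], [d])"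
    by (subst Sum_any.expand_superset[OF _ supp]) auto
  also have "\<dots> = (if n = d then f [] else 0) + (if d \<le> n then f [n - d] else 0)"
    by (auto simp: g_def qsym_M_def)
  finally show ?thesis .
qed

lemma qsym_S_M_snoc_at_single:
  "qsym_S_M (\<beta> @ [d]) [n] = - ((if n = d then qsym_S_M \<beta> [] else 0)
     + (if d \<le> n then qsym_S_M \<beta> [n - d] else (0::'k::comm_ring_1)))"
proof -
  have "take (length \<beta>) (\<beta> @ [d]) = \<beta>" "drop (length \<beta>) (\<beta> @ [d]) = [d]" by simp_all
  then show ?thesis
    by (simp add: qsym_S_M_nonempty interv_sum_list_conv_sum_set_nat qsym_mult_M_short
        qsym_mult_M_single_at_single del: take_append drop_append)
qed

lemma qsym_S_M_at_single_eq_0: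
  "n \<noteq> sum_list \<alpha> \<Longrightarrow> qsym_S_M \<alpha> [n] = (0::'k::comm_ring_1)"
proof (induction \<alpha> arbitrary: n rule: rev_induct)
  case Nil
  then show ?case by (simp add: qsym_S_M_Nil qsym_M_def)
next
  case (snoc d \<beta>)
  then show ?case by (auto simp: qsym_S_M_snoc_at_single qsym_S_M_at_Nil)
qed

lemma M_eval_unit_point:
  "M_eval (\<lambda>i. if i = 0 then 1 else 0) (Suc 0) \<gamma> = (if length \<gamma> \<le> 1 then 1 else (0::'k::comm_ring_1))"
proof -
  consider "\<gamma> = []" | a where "\<gamma> = [a]" | a b \<gamma>' where "\<gamma> = a # b # \<gamma>'"
    by (metis list.exhaust)
  then show ?thesis
  proof cases
    case 1
    then have E: "{is. length is = length \<gamma> \<and> sorted_wrt (<) is \<and> set is \<subseteq> {..<Suc 0}} = {[]}" by auto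
    show ?thesis unfolding M_eval_def E using 1 by simp
  next
    case 2
    then have E: "{is. length is = length \<gamma> \<and> sorted_wrt (<) is \<and> set is \<subseteq> {..<Suc 0}} = {[0]}"
      by (auto simp: length_Suc_conv)
    show ?thesis unfolding M_eval_def E using 2 by simp
  next
    case 3
    then have E: "{is. length is = length \<gamma> \<and> sorted_wrt (<) is \<and> set is \<subseteq> {..<Suc 0}} = {}"
      by (auto simp: length_Suc_conv)
    show ?thesis unfolding M_eval_def E using 3 by simp
  qed
qed

lemma eps_P_qsym_S_M_eq:
  "eps_P (qsym_S_M \<alpha>) = qsym_S_M \<alpha> [] + (qsym_S_M \<alpha> [sum_list \<alpha>] :: 'k::comm_ring_1)"
proof -
  define g where "g = (\<lambda>\<gamma>. qsym_S_M \<alpha> \<gamma> * M_eval (\<lambda>i. if i = 0 then 1 else 0) 1 \<gamma> :: 'k)"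
  have supp: "{\<gamma>. g \<gamma> \<noteq> 0} \<subseteq> {[], [sum_list \<alpha>]}"
  proof clarify
    fix \<gamma> assume ne: "g \<gamma> \<noteq> 0" and "\<gamma> \<noteq> []"
    moreover from ne have "length \<gamma> \<le> 1" by (auto simp: g_def M_eval_unit_point split: if_splits)
    ultimately obtain m where m: "\<gamma> = [m]" by (cases \<gamma>) auto
    with ne have "qsym_S_M \<alpha> [m] \<noteq> (0::'k)" by (simp add: g_def M_eval_unit_point)
    with m show "\<gamma> = [sum_list \<alpha>]" using qsym_S_M_at_single_eq_0 by blast
  qed
  have "eps_P (qsym_S_M \<alpha>) = Sum_any g" unfolding eps_P_def g_def ..
  also have "\<dots> = g [] + g [sum_list \<alpha>]"
    by (subst Sum_any.expand_superset[OF _ supp]) auto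
  also have "\<dots> = qsym_S_M \<alpha> [] + qsym_S_M \<alpha> [sum_list \<alpha>]" by (simp add: g_def M_eval_unit_point)
  finally show ?thesis .
qed

lemma eps_P_qsym_S_M: "eps_P (qsym_S_M \<alpha>) = ((-1) ^ length \<alpha> :: 'k::comm_ring_1)"
proof (induction \<alpha> rule: rev_induct)
  case Nil
  then show ?case by (simp only: eps_P_qsym_S_M_eq) (simp add: qsym_S_M_Nil qsym_M_def)
next
  case (snoc d \<beta>)
  have "eps_P (qsym_S_M (\<beta> @ [d])) = - (qsym_S_M \<beta> [] + (qsym_S_M \<beta> [sum_list \<beta>] :: 'k))"
    by (simp add: eps_P_qsym_S_M_eq qsym_S_M_snoc_at_single qsym_S_M_at_Nil)
  also have "\<dots> = - eps_P (qsym_S_M \<beta>)" by (simp only: eps_P_qsym_S_M_eq)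
  finally show ?case using snoc.IH by simp
qed

lemma qsym_S_qsym_M: "qsym_S (qsym_M \<alpha>) = qsym_S_M \<alpha>"
proof
  fix \<gamma>
  have "qsym_S (qsym_M \<alpha>) \<gamma> = (\<Sum>\<beta>\<in>{\<alpha>}. qsym_M \<alpha> \<beta> * qsym_S_M \<beta> \<gamma>)"
    unfolding qsym_S_def by (rule Sum_any.expand_superset) (auto simp: qsym_M_def)
  then show "qsym_S (qsym_M \<alpha>) \<gamma> = qsym_S_M \<alpha> \<gamma>" by (simp add: qsym_M_def)
qed

definition comps :: "nat \<Rightarrow> nat list set" where
  "comps n = {\<alpha>. is_comp \<alpha> \<and> sum_list \<alpha> = n}"

lemma length_le_sum_list_comp: "is_comp \<alpha> \<Longrightarrow> length \<alpha> \<le> sum_list \<alpha>"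
  by (induction \<alpha>) (auto simp: is_comp_def)

lemma finite_comps: "finite (comps n)"
proof (rule finite_subset)
  show "comps n \<subseteq> {xs. set xs \<subseteq> {..n} \<and> length xs \<le> n}"
    by (auto simp: comps_def dest: length_le_sum_list_comp member_le_sum_list)
qed (rule finite_lists_length_le, simp)

lemma comps_0: "comps 0 = {[]}"
  by (auto simp: comps_def is_comp_def)
    (metis list.set_intros(1) neq_Nil_conv not_less0 sum_list_eq_0_iff)

lemma sum_comps_by_last_part:
  assumes "0 < n"
  shows "(\<Sum>p<n. \<Sum>\<beta>\<in>comps p. G (\<beta> @ [n - p])) = (\<Sum>\<alpha>\<in>comps n. G \<alpha>)"
proof -
  have "(\<Sum>p<n. \<Sum>\<beta>\<in>comps p. G (\<beta> @ [n - p])) = (\<Sum>(p, \<beta>)\<in>Sigma {..<n} comps. G (\<beta> @ [n - p]))"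
    by (rule sum.Sigma) (auto simp: finite_comps)
  also have "\<dots> = (\<Sum>\<alpha>\<in>comps n. G \<alpha>)"
  proof (rule sum.reindex_bij_witness[where j = "\<lambda>(p, \<beta>). \<beta> @ [n - p]"
        and i = "\<lambda>\<alpha>. (n - last \<alpha>, butlast \<alpha>)"])
    fix a assume "a \<in> Sigma {..<n} comps"
    then obtain p \<beta> where a: "a = (p, \<beta>)" "p < n" "is_comp \<beta>" "sum_list \<beta> = p"
      by (auto simp: comps_def)
    then show "(\<lambda>\<alpha>. (n - last \<alpha>, butlast \<alpha>)) ((\<lambda>(p, \<beta>). \<beta> @ [n - p]) a) = a"
      and "(\<lambda>(p, \<beta>). \<beta> @ [n - p]) a \<in> comps n"
      and "G ((\<lambda>(p, \<beta>). \<beta> @ [n - p]) a) = (case a of (p, \<beta>) \<Rightarrow> G (\<beta> @ [n - p]))"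
      by (auto simp: comps_def is_comp_def)
  next
    fix \<alpha> assume "\<alpha> \<in> comps n"
    then have \<alpha>: "is_comp \<alpha>" "sum_list \<alpha> = n" by (auto simp: comps_def)
    with assms obtain \<beta> d where \<beta>: "\<alpha> = \<beta> @ [d]" by (metis rev_exhaust sum_list.Nil less_irrefl)
    with \<alpha> show "(\<lambda>(p, \<beta>). \<beta> @ [n - p]) ((\<lambda>\<alpha>. (n - last \<alpha>, butlast \<alpha>)) \<alpha>) = \<alpha>"
      and "(\<lambda>\<alpha>. (n - last \<alpha>, butlast \<alpha>)) \<alpha> \<in> Sigma {..<n} comps"
      by (auto simp: comps_def is_comp_def)
  qed
  finally show ?thesis .
qed

definition sweedler_sum :: "('a \<Rightarrow> 'b \<Rightarrow> 'c::comm_monoid_add) \<Rightarrow> ('a \<times> 'b) list \<Rightarrow> 'c" where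
  "sweedler_sum B t = (\<Sum>(a, b)\<leftarrow>t. B a b)"

lemma sweedler_sum_Nil [simp]: "sweedler_sum B [] = 0"
  and sweedler_sum_Cons [simp]: "sweedler_sum B (p # t) = B (fst p) (snd p) + sweedler_sum B t"
  by (auto simp: sweedler_sum_def split: prod.splits)

lemma sweedler_sum_append [simp]: "sweedler_sum B (t @ u) = sweedler_sum B t + sweedler_sum B u"
  by (induction t) (auto simp: add.assoc)

lemma sweedler_sum_concat: "sweedler_sum B (concat (map F xs)) = (\<Sum>x\<leftarrow>xs. sweedler_sum B (F x))"
  by (induction xs) auto

lemma sweedler_sum_map:
  "sweedler_sum B (map (\<lambda>(a, b). (f a, g b)) t) = sweedler_sum (\<lambda>a b. B (f a) (g b)) t"
  by (induction t) (auto split: prod.splits)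

lemma sweedler_sum_eq_0: "(\<And>a b. (a, b) \<in> set t \<Longrightarrow> B a b = 0) \<Longrightarrow> sweedler_sum B t = 0"
proof (induction t)
  case (Cons p t)
  then show ?case by (cases p) auto
qed simp

lemma sweedler_sum_sum: "sweedler_sum (\<lambda>a b. \<Sum>i\<in>I. B i a b) t = (\<Sum>i\<in>I. sweedler_sum (B i) t)"
  by (induction t) (auto simp: sum.distrib)

lemma sweedler_sum_mult_right:
  "sweedler_sum B t * y = sweedler_sum (\<lambda>a b. B a b * y) t" for y :: "'c::comm_ring_1"
  by (induction t) (auto simp: algebra_simps)

lemma sweedler_sum_mult_left:
  "y * sweedler_sum B t = sweedler_sum (\<lambda>a b. y * B a b) t" for y :: "'c::comm_ring_1"
  by (induction t) (auto simp: algebra_simps)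

lemma sum_list_concat_map_Cons:
  "(\<Sum>t\<leftarrow>concat (map (\<lambda>(a, b). map ((#) a) (L b)) M). F t)
     = sweedler_sum (\<lambda>a b. \<Sum>t\<leftarrow>L b. F (a # t)) M"
  by (induction M) (auto simp: o_def split: prod.splits)

lemma k_linear_zero: "k_linear sm f \<Longrightarrow> f 0 = 0"
  unfolding k_linear_def by (metis add_cancel_left_right add_0)

lemma k_linear_sweedler_sum: "k_linear sm f \<Longrightarrow> f (sweedler_sum B t) = sweedler_sum (\<lambda>a b. f (B a b)) t"
  by (induction t) (auto simp: k_linear_zero, auto simp: k_linear_def)

lemma k_linear_sum: "k_linear sm f \<Longrightarrow> f (sum g I) = (\<Sum>i\<in>I. f (g i))"
  by (induction I rule: infinite_finite_induct) (auto simp: k_linear_zero, auto simp: k_linear_def)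

locale graded_hopf =
  fixes sm :: "'k::comm_ring_1 \<Rightarrow> 'h::comm_ring_1 \<Rightarrow> 'h"
    and proj :: "nat \<Rightarrow> 'h \<Rightarrow> 'h"
    and \<Delta> :: "'h \<Rightarrow> ('h \<times> 'h) list"
    and \<epsilon> :: "'h \<Rightarrow> 'k"
    and S :: "'h \<Rightarrow> 'h"
  assumes hopf: "comm_connected_graded_hopf sm proj \<Delta> \<epsilon> S"
begin

lemma sm_add_left: "sm (c + d) x = sm c x + sm d x"
  and sm_add_right: "sm c (x + y) = sm c x + sm c y"
  and sm_sm: "sm (c * d) x = sm c (sm d x)"
  and sm_one: "sm 1 x = x"
  and sm_mult_left: "sm c (x * y) = sm c x * y"
  using hopf by (simp_all add: comm_connected_graded_hopf_def k_algebra_def)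

lemma sm_mult_right: "sm c (x * y) = x * sm c y"
  by (metis sm_mult_left mult.commute)

lemma sm_zero_left: "sm 0 x = 0"
  by (metis add_cancel_left_right sm_add_left add_0)

lemma sm_zero_right: "sm c 0 = 0"
  by (metis add_cancel_left_right sm_add_right add_0)

lemma sm_minus_left: "sm (- c) x = - sm c x"
  using sm_add_left[of "- c" c x] by (simp add: sm_zero_left eq_neg_iff_add_eq_0)

lemma k_linear_proj: "k_linear sm (proj n)"
  and proj_proj: "proj m (proj n x) = (if m = n then proj n x else 0)"
  and proj_decomp: "\<exists>N. x = (\<Sum>n\<le>N. proj n x)"
  and connected: "\<exists>c. proj 0 x = sm c 1"
  and counit_add: "\<epsilon> (x + y) = \<epsilon> x + \<epsilon> y"
  and counit_sm: "\<epsilon> (sm c x) = c * \<epsilon> x"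
  and counit_one: "\<epsilon> 1 = 1"
  and counit_proj: "0 < n \<Longrightarrow> \<epsilon> (proj n x) = 0"
  and comult_add: "teq2 sm (\<Delta> (x + y)) (\<Delta> x @ \<Delta> y)"
  and comult_sm: "teq2 sm (\<Delta> (sm c x)) (map (\<lambda>(a, b). (sm c a, b)) (\<Delta> x))"
  and comult_proj: "teq2 sm (\<Delta> (proj n x))
        (concat (map (\<lambda>p. map (\<lambda>(a, b). (proj p a, proj (n - p) b)) (\<Delta> x)) [0..<Suc n]))"
  and comult_one: "teq2 sm (\<Delta> 1) [(1, 1)]"
  and k_linear_S: "k_linear sm S"
  using hopf by (simp_all add: comm_connected_graded_hopf_def)

lemma coassoc: "k_trilinear sm T \<Longrightarrow>
    sweedler_sum (\<lambda>a b. sweedler_sum (\<lambda>c d. T c d b) (\<Delta> a)) (\<Delta> x) =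
    sweedler_sum (\<lambda>a b. sweedler_sum (\<lambda>c d. T a c d) (\<Delta> b)) (\<Delta> x)"
  and counit_left: "sweedler_sum (\<lambda>a b. sm (\<epsilon> a) b) (\<Delta> x) = x"
  and counit_right: "sweedler_sum (\<lambda>a b. sm (\<epsilon> b) a) (\<Delta> x) = x"
  and antipode_left: "sweedler_sum (\<lambda>a b. S a * b) (\<Delta> x) = sm (\<epsilon> x) 1"
  using hopf by (simp_all add: comm_connected_graded_hopf_def sweedler_sum_def)

lemma counit_zero: "\<epsilon> 0 = 0"
  by (metis add_cancel_left_right counit_add add_0)

lemma counit_sum: "\<epsilon> (sum g I) = (\<Sum>i\<in>I. \<epsilon> (g i))"
  by (induction I rule: infinite_finite_induct) (auto simp: counit_zero counit_add)

lemma k_linear_sm: "k_linear sm (sm c)"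
  unfolding k_linear_def by (metis sm_add_right sm_sm mult.commute)

lemma k_bilinear_mult: "k_linear sm f \<Longrightarrow> k_linear sm g \<Longrightarrow> k_bilinear sm (\<lambda>a b. f a * g b)"
  unfolding k_bilinear_def k_linear_def
  by (auto simp: sm_mult_left[symmetric] sm_mult_right[symmetric] distrib_left distrib_right)

lemma k_trilinear_mult: "k_linear sm f \<Longrightarrow> k_linear sm g \<Longrightarrow> k_linear sm h \<Longrightarrow>
    k_trilinear sm (\<lambda>a b c. f a * g b * h c)"
  unfolding k_trilinear_def k_linear_def
  by (auto simp: sm_mult_left[symmetric] sm_mult_right[symmetric] distrib_left distrib_right)

lemma sweedler_sum_teq2: "teq2 sm t u \<Longrightarrow> k_bilinear sm B \<Longrightarrow> sweedler_sum B t = sweedler_sum B u"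
  unfolding teq2_def sweedler_sum_def by blast

lemma sweedler_sum_comult_add:
  "k_bilinear sm B \<Longrightarrow> sweedler_sum B (\<Delta> (x + y)) = sweedler_sum B (\<Delta> x) + sweedler_sum B (\<Delta> y)"
  using sweedler_sum_teq2[OF comult_add] by simp

lemma sweedler_sum_comult_sm:
  assumes B: "k_bilinear sm B"
  shows "sweedler_sum B (\<Delta> (sm c x)) = sm c (sweedler_sum B (\<Delta> x))"
proof -
  have "sweedler_sum B (\<Delta> (sm c x)) = sweedler_sum (\<lambda>a b. B (sm c a) b) (\<Delta> x)"
    using sweedler_sum_teq2[OF comult_sm B] sweedler_sum_map[of B "sm c" "\<lambda>b. b"] by simp
  also have "\<dots> = sweedler_sum (\<lambda>a b. sm c (B a b)) (\<Delta> x)"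
    using B unfolding k_bilinear_def k_linear_def by simp
  finally show ?thesis by (simp add: k_linear_sweedler_sum[OF k_linear_sm])
qed

lemma sweedler_sum_comult_proj:
  assumes B: "k_bilinear sm B"
  shows "sweedler_sum B (\<Delta> (proj n x))
           = (\<Sum>p\<le>n. sweedler_sum (\<lambda>a b. B (proj p a) (proj (n - p) b)) (\<Delta> x))"
proof -
  have "sweedler_sum B (\<Delta> (proj n x))
      = (\<Sum>p\<leftarrow>[0..<Suc n]. sweedler_sum (\<lambda>a b. B (proj p a) (proj (n - p) b)) (\<Delta> x))"
    using sweedler_sum_teq2[OF comult_proj B] by (simp add: sweedler_sum_concat sweedler_sum_map)
  also have "\<dots> = (\<Sum>p\<le>n. sweedler_sum (\<lambda>a b. B (proj p a) (proj (n - p) b)) (\<Delta> x))"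
    by (simp only: sum_set_upt_conv_sum_list_nat[symmetric] set_upt atLeast0LessThan lessThan_Suc_atMost)
  finally show ?thesis .
qed

lemma proj_0_eq: "proj 0 x = sm (\<epsilon> x) 1"
proof -
  obtain c where c: "proj 0 x = sm c 1" using connected by blast
  obtain N where N: "x = (\<Sum>n\<le>N. proj n x)" using proj_decomp by blast
  have "\<epsilon> x = (\<Sum>n\<le>N. \<epsilon> (proj n x))" by (subst N) (rule counit_sum)
  also have "\<dots> = \<epsilon> (proj 0 x)"
    by (subst sum.mono_neutral_right[where S = "{0}"]) (auto simp: counit_proj)
  finally show ?thesis using c by (simp add: counit_sm counit_one)
qed

lemma S_one: "S 1 = 1"
  using antipode_left[of 1] sweedler_sum_teq2[OF comult_one k_bilinear_mult[OF k_linear_S, of "\<lambda>b. b"]]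
  by (simp add: k_linear_def counit_one sm_one)

lemma S_proj_0: "S (proj 0 x) = sm (\<epsilon> x) 1"
  using k_linear_S unfolding k_linear_def by (metis proj_0_eq S_one)

text \<open>Split \<Sum> S((\<pi>_n x)_(1)) (\<pi>_n x)_(2) = \<epsilon>(\<pi>_n x) = 0 by bidegree: by the counit axiom the
  summand of bidegree (n, 0) is S(\<pi>_n x).\<close>
lemma S_proj_recursion:
  assumes "0 < n"
  shows "S (proj n x) = - (\<Sum>p<n. sweedler_sum (\<lambda>u v. S (proj p u) * proj (n - p) v) (\<Delta> x))"
proof -
  have B: "k_bilinear sm (\<lambda>a b. S a * b)"
    using k_bilinear_mult[OF k_linear_S, of "\<lambda>b. b"] by (simp add: k_linear_def)
  have top: "sweedler_sum (\<lambda>u v. S (proj n u) * proj 0 v) (\<Delta> x) = S (proj n x)"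
  proof -
    have "sweedler_sum (\<lambda>u v. S (proj n u) * proj 0 v) (\<Delta> x)
        = sweedler_sum (\<lambda>u v. S (proj n (sm (\<epsilon> v) u))) (\<Delta> x)"
      using k_linear_S k_linear_proj
      by (simp add: proj_0_eq sm_mult_right[symmetric] sm_one k_linear_def)
    also have "\<dots> = S (proj n x)"
      by (simp add: k_linear_sweedler_sum[OF k_linear_S, symmetric]
          k_linear_sweedler_sum[OF k_linear_proj, symmetric] counit_right)
    finally show ?thesis .
  qed
  have "0 = sweedler_sum (\<lambda>a b. S a * b) (\<Delta> (proj n x))"
    using assms by (simp add: antipode_left counit_proj sm_zero_left)
  also have "\<dots> = (\<Sum>p<n. sweedler_sum (\<lambda>u v. S (proj p u) * proj (n - p) v) (\<Delta> x)) + S (proj n x)"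
    by (simp add: sweedler_sum_comult_proj[OF B] lessThan_Suc_atMost[symmetric] top)
  finally show ?thesis by (simp add: eq_neg_iff_add_eq_0 add.commute)
qed

abbreviation \<xi> where "\<xi> \<equiv> xi sm proj \<Delta> \<epsilon>"

lemma xi_Nil: "\<xi> [] x = sm (\<epsilon> x) 1"
  and xi_single: "\<xi> [a] x = proj a x"
  by (simp_all add: xi_def)

lemma xi_Cons: "\<alpha> \<noteq> [] \<Longrightarrow> \<xi> (a # \<alpha>) x = sweedler_sum (\<lambda>u v. proj a u * \<xi> \<alpha> v) (\<Delta> x)"
  by (cases \<alpha>) (simp_all add: xi_def sum_list_concat_map_Cons sum_list_const_mult)

lemma k_linear_xi: "k_linear sm (\<xi> \<alpha>)"
proof (induction \<alpha>)
  case Nil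
  show ?case unfolding k_linear_def xi_Nil by (simp add: counit_add counit_sm sm_add_left sm_sm)
next
  case (Cons a \<alpha>)
  show ?case
  proof (cases "\<alpha> = []")
    case True
    then show ?thesis using k_linear_proj by (simp add: xi_single)
  next
    case False
    have "k_bilinear sm (\<lambda>u v. proj a u * \<xi> \<alpha> v)" by (rule k_bilinear_mult[OF k_linear_proj Cons.IH])
    then show ?thesis unfolding k_linear_def xi_Cons[OF False]
      by (simp add: sweedler_sum_comult_add sweedler_sum_comult_sm)
  qed
qed

lemma xi_proj_eq_0: "n \<noteq> sum_list \<alpha> \<Longrightarrow> \<xi> \<alpha> (proj n x) = 0"
proof (induction \<alpha> arbitrary: n x)
  case Nil
  then show ?case by (simp add: xi_Nil counit_proj sm_zero_left)
next
  case (Cons a \<alpha>)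
  show ?case
  proof (cases "\<alpha> = []")
    case True
    then show ?thesis using Cons.prems by (simp add: xi_single proj_proj)
  next
    case False
    have "\<xi> (a # \<alpha>) (proj n x)
        = (\<Sum>p\<le>n. sweedler_sum (\<lambda>u v. proj a (proj p u) * \<xi> \<alpha> (proj (n - p) v)) (\<Delta> x))"
      by (simp only: xi_Cons[OF False]
          sweedler_sum_comult_proj[OF k_bilinear_mult[OF k_linear_proj k_linear_xi]])
    also have "\<dots> = 0"
      using Cons by (intro sum.neutral ballI sweedler_sum_eq_0) (auto simp: proj_proj)
    finally show ?thesis .
  qed
qed

lemma xi_eq_0_if_degree_bounded:
  assumes "x = (\<Sum>n\<le>N. proj n x)" and "N < sum_list \<alpha>"
  shows "\<xi> \<alpha> x = 0"
proof -
  have "\<xi> \<alpha> x = (\<Sum>n\<le>N. \<xi> \<alpha> (proj n x))" by (subst assms(1)) (rule k_linear_sum[OF k_linear_xi])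
  also have "\<dots> = 0" using assms(2) by (intro sum.neutral) (auto simp: xi_proj_eq_0)
  finally show ?thesis .
qed

text \<open>Peeling off the last factor instead of the first one is where coassociativity enters.\<close>
lemma xi_snoc: "\<xi> (\<beta> @ [d]) x = sweedler_sum (\<lambda>u v. \<xi> \<beta> u * proj d v) (\<Delta> x)"
proof (induction \<beta> arbitrary: x)
  case Nil
  have "sweedler_sum (\<lambda>u v. \<xi> [] u * proj d v) (\<Delta> x) = sweedler_sum (\<lambda>u v. proj d (sm (\<epsilon> u) v)) (\<Delta> x)"
    using k_linear_proj unfolding k_linear_def by (simp add: xi_Nil sm_mult_left[symmetric])
  also have "\<dots> = proj d x"
    by (simp add: k_linear_sweedler_sum[OF k_linear_proj, symmetric] counit_left)
  finally show ?case by (simp add: xi_single)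
next
  case (Cons b \<beta>)
  show ?case
  proof (cases "\<beta> = []")
    case True
    then show ?thesis by (simp add: xi_Cons xi_single)
  next
    case False
    define T where "T = (\<lambda>u v w. proj b u * \<xi> \<beta> v * proj d w)"
    have T: "k_trilinear sm T"
      unfolding T_def by (rule k_trilinear_mult[OF k_linear_proj k_linear_xi k_linear_proj])
    have "\<xi> ((b # \<beta>) @ [d]) x = sweedler_sum (\<lambda>u v. proj b u * \<xi> (\<beta> @ [d]) v) (\<Delta> x)"
      by (simp add: xi_Cons)
    also have "\<dots> = sweedler_sum (\<lambda>u v. sweedler_sum (\<lambda>c w. T u c w) (\<Delta> v)) (\<Delta> x)"
      by (simp add: Cons.IH sweedler_sum_mult_left T_def mult.assoc)
    also have "\<dots> = sweedler_sum (\<lambda>u v. sweedler_sum (\<lambda>c w. T c w v) (\<Delta> u)) (\<Delta> x)"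
      using coassoc[OF T] by simp
    also have "\<dots> = sweedler_sum (\<lambda>u v. \<xi> (b # \<beta>) u * proj d v) (\<Delta> x)"
      by (simp add: xi_Cons[OF False] sweedler_sum_mult_right T_def)
    finally show ?thesis .
  qed
qed

lemma S_proj_eq_sum_xi: "S (proj n x) = (\<Sum>\<alpha>\<in>comps n. sm ((-1) ^ length \<alpha>) (\<xi> \<alpha> x))"
proof (induction n arbitrary: x rule: less_induct)
  case (less n)
  show ?case
  proof (cases "n = 0")
    case True
    then show ?thesis by (simp add: comps_0 S_proj_0 xi_Nil sm_one)
  next
    case False
    have IH: "sweedler_sum (\<lambda>u v. S (proj p u) * proj (n - p) v) (\<Delta> x)
        = (\<Sum>\<beta>\<in>comps p. sm ((-1) ^ length \<beta>) (\<xi> (\<beta> @ [n - p]) x))" if "p < n" for p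
    proof -
      have "sweedler_sum (\<lambda>u v. S (proj p u) * proj (n - p) v) (\<Delta> x)
          = (\<Sum>\<beta>\<in>comps p. sweedler_sum (\<lambda>u v. sm ((-1) ^ length \<beta>) (\<xi> \<beta> u * proj (n - p) v)) (\<Delta> x))"
        by (simp add: less.IH[OF that] sum_distrib_right sm_mult_left sweedler_sum_sum)
      then show ?thesis by (simp add: k_linear_sweedler_sum[OF k_linear_sm, symmetric] xi_snoc)
    qed
    have "S (proj n x) = - (\<Sum>p<n. sweedler_sum (\<lambda>u v. S (proj p u) * proj (n - p) v) (\<Delta> x))"
      using False by (simp add: S_proj_recursion)
    also have "\<dots> = - (\<Sum>p<n. \<Sum>\<beta>\<in>comps p. sm ((-1) ^ length \<beta>) (\<xi> (\<beta> @ [n - p]) x))"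
      by (simp add: IH)
    also have "\<dots> = (\<Sum>p<n. \<Sum>\<beta>\<in>comps p. sm ((-1) ^ length (\<beta> @ [n - p])) (\<xi> (\<beta> @ [n - p]) x))"
      by (simp add: sum_negf[symmetric] sm_minus_left)
    also have "\<dots> = (\<Sum>\<alpha>\<in>comps n. sm ((-1) ^ length \<alpha>) (\<xi> \<alpha> x))"
      by (rule sum_comps_by_last_part[where G = "\<lambda>\<alpha>. sm ((-1) ^ length \<alpha>) (\<xi> \<alpha> x)"])
        (use False in simp)
    finally show ?thesis .
  qed
qed

lemma xi_support_subset:
  assumes "x = (\<Sum>n\<le>N. proj n x)"
  shows "{\<alpha>. is_comp \<alpha> \<and> \<xi> \<alpha> x \<noteq> 0} \<subseteq> (\<Union>n\<le>N. comps n)"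
  using xi_eq_0_if_degree_bounded[OF assms] by (force simp: comps_def not_less)

lemma finite_xi_support: "finite {\<alpha>. is_comp \<alpha> \<and> \<xi> \<alpha> x \<noteq> 0}"
proof -
  obtain N where "x = (\<Sum>n\<le>N. proj n x)" using proj_decomp by blast
  then show ?thesis by (rule finite_subset[OF xi_support_subset]) (simp add: finite_comps)
qed

lemma takeuchi_formula:
  "S x = (\<Sum>\<alpha>\<in>{\<alpha>. is_comp \<alpha> \<and> \<xi> \<alpha> x \<noteq> 0}. sm ((-1) ^ length \<alpha>) (\<xi> \<alpha> x))"
proof -
  obtain N where N: "x = (\<Sum>n\<le>N. proj n x)" using proj_decomp by blast
  define U where "U = (\<Union>n\<le>N. comps n)"
  have "S x = (\<Sum>n\<le>N. S (proj n x))" by (subst N) (rule k_linear_sum[OF k_linear_S])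
  also have "\<dots> = (\<Sum>n\<le>N. \<Sum>\<alpha>\<in>comps n. sm ((-1) ^ length \<alpha>) (\<xi> \<alpha> x))"
    by (simp add: S_proj_eq_sum_xi)
  also have "\<dots> = (\<Sum>\<alpha>\<in>U. sm ((-1) ^ length \<alpha>) (\<xi> \<alpha> x))"
    unfolding U_def by (rule sum.UNION_disjoint[symmetric]) (auto simp: finite_comps, auto simp: comps_def)
  also have "\<dots> = (\<Sum>\<alpha>\<in>{\<alpha>. is_comp \<alpha> \<and> \<xi> \<alpha> x \<noteq> 0}. sm ((-1) ^ length \<alpha>) (\<xi> \<alpha> x))"
  proof (rule sum.mono_neutral_right)
    show "finite U" by (simp add: U_def finite_comps)
    show "{\<alpha>. is_comp \<alpha> \<and> \<xi> \<alpha> x \<noteq> 0} \<subseteq> U" unfolding U_def by (rule xi_support_subset[OF N])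
  qed (auto simp: U_def comps_def sm_zero_right)
  finally show ?thesis .
qed

end

theorem corollary6p3:
  fixes sm :: "'k::comm_ring_1 \<Rightarrow> 'h::comm_ring_1 \<Rightarrow> 'h"
    and proj :: "nat \<Rightarrow> 'h \<Rightarrow> 'h"
    and \<Delta> :: "'h \<Rightarrow> ('h \<times> 'h) list"
    and \<epsilon> :: "'h \<Rightarrow> 'k"
    and S :: "'h \<Rightarrow> 'h"
  assumes "comm_connected_graded_hopf sm proj \<Delta> \<epsilon> S"
  shows "finite {\<alpha>. is_comp \<alpha> \<and> xi sm proj \<Delta> \<epsilon> \<alpha> h \<noteq> 0} \<and>
         S h = (\<Sum>\<alpha> \<in> {\<alpha>. is_comp \<alpha> \<and> xi sm proj \<Delta> \<epsilon> \<alpha> h \<noteq> 0}.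
                  sm (eps_P (qsym_S (qsym_M \<alpha> :: nat list \<Rightarrow> 'k))) (xi sm proj \<Delta> \<epsilon> \<alpha> h))"
proof -
  interpret graded_hopf sm proj \<Delta> \<epsilon> S by (rule graded_hopf.intro[OF assms])
  show ?thesis
    using finite_xi_support takeuchi_formula by (simp add: qsym_S_qsym_M eps_P_qsym_S_M)
qed

end
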